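(* Let $N\ge1$, $L>0$, $\epsilon>0$, $\sigma_w^2>0$, $P_a>0$, $\chi_{aw}>0$, $\chi_{rw}>0$, let $h_{ar_1},\dots,h_{ar_N}\in\mathbb{C}$ be fixed, and let $\rho_n\in[0,1]$, $\theta_n\in[0,2\pi)$ for $n=1,\dots,N$. Let $h_{aw}\sim\mathcal{CN}(0,\chi_{aw})$ and $h_{rw_1},\dots,h_{rw_N}\sim\mathcal{CN}(0,\chi_{rw})$ be independent random variables, and set $$X=\Big|\sum_{n=1}^N h_{rw_n}^*\rho_n e^{j\theta_n}h_{ar_n}+h_{aw}\Big|^2,\qquad \mathcal{D}=L\left[\ln\!\left(1+\frac{P_aX}{\sigma_w^2}\right)-\frac{P_aX}{P_aX+\sigma_w^2}\right].$$ Then the covertness constraint $\mathbb{E}_X[\mathcal{D}]\le 2\epsilon^2$ is equivalent to $$\frac{P_a}{\sigma_w^2}\left(\chi_{rw}\sum_{n=1}^N\rho_n^2|h_{ar_n}|^2+\chi_{aw}\right)\le\bar{\epsilon},$$ where $\bar{\epsilon}>0$ is the solution of $$\left(1+\frac{1}{\bar{\epsilon}}\right)e^{1/\bar{\epsilon}}E_1\!\left(\frac{1}{\bar{\epsilon}}\right)-1-\frac{2\epsilon^2}{L}=0,$$ with $E_1(x)=\int_x^\infty \frac{e^{-t}}{t}\,dt$ the exponential integral.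
   Context: $\mathcal{CN}(0,\sigma^2)$ denotes a circularly-symmetric complex Gaussian distribution with mean $0$ and variance $\sigma^2$. In the model, $h_{aw}$ is the direct Alice–Willie channel, $h_{rw_n}$ the channel from the $n$-th IRS element to Willie, $h_{ar_n}$ the Alice-to-$n$-th-IRS-element channel, $\rho_n,\theta_n$ the IRS reflection amplitude and phase, $P_a$ Alice's transmit power, $\sigma_w^2$ Willie's noise variance, and $\mathcal{D}$ the Kullback–Leibler divergence between Willie's observations under the two hypotheses over $L$ channel uses. *)

theory Defs
  imports "HOL-Probability.Probability"
begin

definition E1 :: "real \<Rightarrow> real" where
  "E1 x = (LBINT t=ereal x..\<infinity>. exp (- t) / t)"

definition cgauss :: "'a measure \<Rightarrow> ('a \<Rightarrow> complex) \<Rightarrow> real \<Rightarrow> bool" where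
  "cgauss M X chi \<longleftrightarrow>
     X \<in> borel_measurable M \<and>
     prob_space.indep_var M borel (\<lambda>\<omega>. Re (X \<omega>)) borel (\<lambda>\<omega>. Im (X \<omega>)) \<and>
     distributed M lborel (\<lambda>\<omega>. Re (X \<omega>)) (normal_density 0 (sqrt (chi / 2))) \<and>
     distributed M lborel (\<lambda>\<omega>. Im (X \<omega>)) (normal_density 0 (sqrt (chi / 2)))"

end

theory Submission
  imports Defs "HOL-Real_Asymp.Real_Asymp"
begin

text \<open>Circularly-symmetric Gaussian laws are invariant under rotations and closed under
  conjugation, scaling by a nonzero c (which multiplies the variance by |c|^2) and independent
  sums. Hence Z = h_aw + \<Sum>_n cnj(h_rw_n) \<rho>_n e^(j \<theta>_n) h_ar_n has law CN(0, \<lambda>) with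
  \<lambda> = \<chi>_rw \<Sum>_n \<rho>_n^2 |h_ar_n|^2 + \<chi>_aw, and integrating in polar form shows that X = |Z|^2 is
  \<lambda> times a standard exponential variable Y. So E[D] = L m(P_a \<lambda> / \<sigma>_w^2), where
  m(t) = E[ln (1 + t Y) - t Y / (1 + t Y)]; shifting by 1/t and integrating by parts gives
  m(t) = (1 + 1/t) e^(1/t) E1(1/t) - 1. The integrand is strictly increasing in t, hence so is m,
  and E[D] \<le> 2 \<epsilon>^2 = L m(epsbar) is equivalent to P_a \<lambda> / \<sigma>_w^2 \<le> epsbar.\<close>

section \<open>Integrals over the plane\<close>

lemma measurable_Complex [measurable]:
  assumes [measurable]: "f \<in> borel_measurable M" "g \<in> borel_measurable M"
  shows "(\<lambda>x. Complex (f x) (g x)) \<in> borel_measurable M"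
  unfolding Complex_eq by measurable

lemma borel_measurable_cnj [measurable]: "cnj \<in> borel_measurable borel"
proof -
  have "(\<lambda>z. Complex (Re z) (- Im z)) \<in> borel_measurable borel"
    by measurable
  moreover have "(\<lambda>z. Complex (Re z) (- Im z)) = cnj"
    by (auto simp: complex_eq_iff)
  ultimately show ?thesis
    by simp
qed

definition plane_nn_integral :: "(complex \<Rightarrow> ennreal) \<Rightarrow> ennreal" where
  "plane_nn_integral F = (\<integral>\<^sup>+a. \<integral>\<^sup>+b. F (Complex a b) \<partial>lborel \<partial>lborel)"

lemma plane_nn_integral_product:
  assumes [measurable]: "F \<in> borel_measurable borel" "f \<in> borel_measurable borel" "g \<in> borel_measurable borel"
  shows "plane_nn_integral (\<lambda>z. F z * ennreal (f (Re z)) * ennreal (g (Im z))) =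
    (\<integral>\<^sup>+a. (\<integral>\<^sup>+b. F (Complex a b) * ennreal (g b) \<partial>lborel) * ennreal (f a) \<partial>lborel)"
  unfolding plane_nn_integral_def
  by (intro nn_integral_cong, subst nn_integral_multc[symmetric]) (auto simp: mult_ac)

lemma plane_nn_integral_shear_Re:
  assumes [measurable]: "F \<in> borel_measurable borel"
  shows "plane_nn_integral (\<lambda>z. F (Complex (Re z + t * Im z) (Im z))) = plane_nn_integral F"
proof -
  have "plane_nn_integral (\<lambda>z. F (Complex (Re z + t * Im z) (Im z))) =
     (\<integral>\<^sup>+b. \<integral>\<^sup>+a. F (Complex (a + t * b) b) \<partial>lborel \<partial>lborel)"
    unfolding plane_nn_integral_def by (simp, rule lborel_pair.Fubini'[symmetric]) measurable
  also have "\<dots> = (\<integral>\<^sup>+b. \<integral>\<^sup>+a. F (Complex a b) \<partial>lborel \<partial>lborel)"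
    using nn_integral_real_affine[of "\<lambda>a. F (Complex a b)" 1 "t * b" for b]
    by (simp add: add.commute)
  also have "\<dots> = plane_nn_integral F"
    unfolding plane_nn_integral_def by (rule lborel_pair.Fubini') measurable
  finally show ?thesis .
qed

lemma plane_nn_integral_shear_Im:
  assumes [measurable]: "F \<in> borel_measurable borel"
  shows "plane_nn_integral (\<lambda>z. F (Complex (Re z) (Im z + t * Re z))) = plane_nn_integral F"
  unfolding plane_nn_integral_def
  using nn_integral_real_affine[of "\<lambda>b. F (Complex a b)" 1 "t * a" for a]
  by (simp add: add.commute)

text \<open>The rotation by u = p + i q with p \<noteq> -1 is the product of the three shears
  (x, y) \<mapsto> (x + \<alpha> y, y), (x, y) \<mapsto> (x, y + q x), (x, y) \<mapsto> (x + \<alpha> y, y), where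
  \<alpha> = - q / (1 + p) = - tan (\<theta> / 2).\<close>
lemma plane_nn_integral_rotate_three_shears:
  assumes [measurable]: "F \<in> borel_measurable borel" and u: "cmod u = 1" and "Re u \<noteq> -1"
  shows "plane_nn_integral (\<lambda>z. F (u * z)) = plane_nn_integral F"
proof -
  define p q where "p = Re u" and "q = Im u"
  have pq: "p\<^sup>2 + q\<^sup>2 = 1"
    using u unfolding p_def q_def cmod_def by simp
  have p: "1 + p \<noteq> 0"
    using \<open>Re u \<noteq> -1\<close> unfolding p_def by simp
  define \<alpha> where "\<alpha> = - q / (1 + p)"
  have diag: "1 + \<alpha> * q = p"
    using pq p unfolding \<alpha>_def by (simp add: field_simps power2_eq_square)
  have "\<alpha> * (1 + p) = - q"
    using p unfolding \<alpha>_def by simp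
  then have "(1 + p)\<^sup>2 * (2 * \<alpha> + \<alpha>\<^sup>2 * q) = (1 + p)\<^sup>2 * (- q)"
    using pq by algebra
  then have offdiag: "2 * \<alpha> + \<alpha>\<^sup>2 * q = - q"
    using p by (metis mult_left_cancel mult_minus_right power_not_zero)
  define G1 where "G1 = (\<lambda>z. F (Complex (Re z + \<alpha> * Im z) (Im z)))"
  define G2 where "G2 = (\<lambda>z. G1 (Complex (Re z) (Im z + q * Re z)))"
  have [measurable]: "G1 \<in> borel_measurable borel" "G2 \<in> borel_measurable borel"
    unfolding G1_def G2_def by measurable
  have "u * z = Complex (Re z * (1 + \<alpha> * q) + Im z * (2 * \<alpha> + \<alpha>\<^sup>2 * q)) (q * Re z + Im z * (1 + \<alpha> * q))"
    for z
    unfolding diag offdiag by (simp add: complex_eq_iff p_def q_def algebra_simps)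
  then have "plane_nn_integral (\<lambda>z. F (u * z)) =
      plane_nn_integral (\<lambda>z. G2 (Complex (Re z + \<alpha> * Im z) (Im z)))"
    unfolding G2_def G1_def by (simp add: algebra_simps power2_eq_square)
  also have "\<dots> = plane_nn_integral G2"
    by (rule plane_nn_integral_shear_Re) measurable
  also have "\<dots> = plane_nn_integral G1"
    unfolding G2_def by (rule plane_nn_integral_shear_Im) measurable
  also have "\<dots> = plane_nn_integral F"
    unfolding G1_def by (rule plane_nn_integral_shear_Re) measurable
  finally show ?thesis .
qed

lemma plane_nn_integral_rotate:
  assumes [measurable]: "F \<in> borel_measurable borel" and u: "cmod u = 1"
  shows "plane_nn_integral (\<lambda>z. F (u * z)) = plane_nn_integral F"
proof (cases "Re u = -1")
  case True
  then have "u = \<i> * \<i>"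
    using u by (simp add: complex_eq_iff cmod_def)
  then have "plane_nn_integral (\<lambda>z. F (u * z)) = plane_nn_integral (\<lambda>z. (\<lambda>w. F (\<i> * w)) (\<i> * z))"
    by (simp add: mult.assoc)
  also have "\<dots> = plane_nn_integral (\<lambda>w. F (\<i> * w))"
    by (rule plane_nn_integral_rotate_three_shears) auto
  also have "\<dots> = plane_nn_integral F"
    by (rule plane_nn_integral_rotate_three_shears) auto
  finally show ?thesis .
qed (use plane_nn_integral_rotate_three_shears u in auto)

section \<open>Circularly-symmetric Gaussian laws\<close>

definition gaussian :: "real \<Rightarrow> real \<Rightarrow> real" where
  "gaussian v = normal_density 0 (sqrt v)"

lemma gaussian_nonneg [simp]: "0 \<le> gaussian v x"
  by (simp add: gaussian_def)

lemma borel_measurable_gaussian [measurable]: "gaussian v \<in> borel_measurable borel"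
  unfolding gaussian_def by measurable

lemma gaussian_minus [simp]: "gaussian v (- x) = gaussian v x"
  by (simp add: gaussian_def normal_density_def)

lemma gaussian_scale:
  assumes "r > 0" "v > 0"
  shows "r * gaussian (r\<^sup>2 * v) (r * x) = gaussian v x"
proof -
  have "sqrt (2 * pi * (r\<^sup>2 * v)) = r * sqrt (2 * pi * v)"
    using assms by (simp add: real_sqrt_mult)
  then show ?thesis
    using assms by (simp add: gaussian_def normal_density_def power_mult_distrib)
qed

lemma gaussian_mult_gaussian:
  assumes "v > 0"
  shows "gaussian v x * gaussian v y = exp (- (x\<^sup>2 + y\<^sup>2) / (2 * v)) / (2 * pi * v)"
proof -
  have "sqrt (2 * pi * v) * sqrt (2 * pi * v) = 2 * pi * v"
    using assms by simp
  then show ?thesis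
    using assms by (simp add: gaussian_def normal_density_def exp_add[symmetric] field_simps)
qed

lemma nn_integral_gaussian_scale:
  assumes [measurable]: "f \<in> borel_measurable borel" and r: "r > 0" and v: "v > 0"
  shows "(\<integral>\<^sup>+x. f (r * x) * ennreal (gaussian v x) \<partial>lborel) =
    (\<integral>\<^sup>+x. f x * ennreal (gaussian (r\<^sup>2 * v) x) \<partial>lborel)"
proof -
  have "(\<integral>\<^sup>+x. f x * ennreal (gaussian (r\<^sup>2 * v) x) \<partial>lborel) =
      ennreal r * (\<integral>\<^sup>+x. f (r * x) * ennreal (gaussian (r\<^sup>2 * v) (r * x)) \<partial>lborel)"
    using nn_integral_real_affine[of "\<lambda>x. f x * ennreal (gaussian (r\<^sup>2 * v) x)" r 0] r by simp
  also have "\<dots> = (\<integral>\<^sup>+x. f (r * x) * ennreal (r * gaussian (r\<^sup>2 * v) (r * x)) \<partial>lborel)"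
    using r by (subst nn_integral_cmult[symmetric]) (auto simp: ennreal_mult mult_ac)
  also have "\<dots> = (\<integral>\<^sup>+x. f (r * x) * ennreal (gaussian v x) \<partial>lborel)"
    using gaussian_scale[OF r v] by simp
  finally show ?thesis ..
qed

lemma nn_integral_gaussian_convolution:
  assumes [measurable]: "f \<in> borel_measurable borel" and v1: "v1 > 0" and v2: "v2 > 0"
  shows "(\<integral>\<^sup>+x. (\<integral>\<^sup>+y. f (x + y) * ennreal (gaussian v2 y) \<partial>lborel) * ennreal (gaussian v1 x) \<partial>lborel) =
    (\<integral>\<^sup>+z. f z * ennreal (gaussian (v1 + v2) z) \<partial>lborel)"
proof -
  have "(\<integral>\<^sup>+y. f (x + y) * ennreal (gaussian v2 y) \<partial>lborel) =
      (\<integral>\<^sup>+z. f z * ennreal (gaussian v2 (z - x)) \<partial>lborel)" for x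
    using nn_integral_real_affine[of "\<lambda>z. f z * ennreal (gaussian v2 (z - x))" 1 x] by simp
  then have "(\<integral>\<^sup>+x. (\<integral>\<^sup>+y. f (x + y) * ennreal (gaussian v2 y) \<partial>lborel) * ennreal (gaussian v1 x) \<partial>lborel) =
      (\<integral>\<^sup>+x. \<integral>\<^sup>+z. f z * ennreal (gaussian v2 (z - x) * gaussian v1 x) \<partial>lborel \<partial>lborel)"
    by (simp, intro nn_integral_cong, subst nn_integral_multc[symmetric]) (auto simp: ennreal_mult mult_ac)
  also have "\<dots> = (\<integral>\<^sup>+z. \<integral>\<^sup>+x. f z * ennreal (gaussian v2 (z - x) * gaussian v1 x) \<partial>lborel \<partial>lborel)"
    by (rule lborel_pair.Fubini'[symmetric]) measurable
  also have "\<dots> = (\<integral>\<^sup>+z. f z * (\<integral>\<^sup>+x. ennreal (gaussian v2 (z - x) * gaussian v1 x) \<partial>lborel) \<partial>lborel)"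
    by (intro nn_integral_cong nn_integral_cmult) measurable
  also have "\<dots> = (\<integral>\<^sup>+z. f z * ennreal (gaussian (v1 + v2) z) \<partial>lborel)"
  proof -
    have "(\<integral>\<^sup>+x. ennreal (gaussian v2 (z - x) * gaussian v1 x) \<partial>lborel) = gaussian (v1 + v2) z" for z
      using fun_cong[OF conv_normal_density_zero_mean[of "sqrt v2" "sqrt v1"], of z] v1 v2
      by (simp add: gaussian_def add.commute)
    then show ?thesis
      by simp
  qed
  finally show ?thesis .
qed

definition circ_gaussian_law :: "'a measure \<Rightarrow> ('a \<Rightarrow> complex) \<Rightarrow> real \<Rightarrow> bool" where
  "circ_gaussian_law M W chi \<longleftrightarrow> 0 < chi \<and> W \<in> borel_measurable M \<and>
     (\<forall>\<Phi> \<in> borel_measurable borel. (\<integral>\<^sup>+\<omega>. \<Phi> (W \<omega>) \<partial>M) =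
        plane_nn_integral (\<lambda>z. \<Phi> z * ennreal (gaussian (chi / 2) (Re z)) * ennreal (gaussian (chi / 2) (Im z))))"

lemma circ_gaussian_lawD:
  assumes "circ_gaussian_law M W chi"
  shows "0 < chi" and "W \<in> borel_measurable M"
    and "\<Phi> \<in> borel_measurable borel \<Longrightarrow> (\<integral>\<^sup>+\<omega>. \<Phi> (W \<omega>) \<partial>M) =
      plane_nn_integral (\<lambda>z. \<Phi> z * ennreal (gaussian (chi / 2) (Re z)) * ennreal (gaussian (chi / 2) (Im z)))"
  using assms by (auto simp: circ_gaussian_law_def)

lemma (in prob_space) nn_integral_indep_var:
  assumes "indep_var S X T Y" and [measurable]: "case_prod f \<in> borel_measurable (S \<Otimes>\<^sub>M T)"
  shows "(\<integral>\<^sup>+\<omega>. f (X \<omega>) (Y \<omega>) \<partial>M) = (\<integral>\<^sup>+\<omega>. \<integral>\<^sup>+\<omega>'. f (X \<omega>) (Y \<omega>') \<partial>M \<partial>M)"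
proof -
  have [measurable]: "X \<in> measurable M S" "Y \<in> measurable M T"
    and joint: "distr M S X \<Otimes>\<^sub>M distr M T Y = distr M (S \<Otimes>\<^sub>M T) (\<lambda>\<omega>. (X \<omega>, Y \<omega>))"
    using assms(1) by (auto simp: indep_var_distribution_eq)
  interpret DX: prob_space "distr M S X"
    by (rule prob_space_distr) measurable
  interpret DY: prob_space "distr M T Y"
    by (rule prob_space_distr) measurable
  interpret pair_sigma_finite "distr M S X" "distr M T Y"
    by (intro pair_sigma_finite.intro prob_space_imp_sigma_finite) unfold_locales
  have "(\<integral>\<^sup>+\<omega>. f (X \<omega>) (Y \<omega>) \<partial>M) = (\<integral>\<^sup>+p. f (fst p) (snd p) \<partial>(distr M S X \<Otimes>\<^sub>M distr M T Y))"
    unfolding joint by (subst nn_integral_distr) auto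
  also have "\<dots> = (\<integral>\<^sup>+x. \<integral>\<^sup>+y. f x y \<partial>distr M T Y \<partial>distr M S X)"
    by (subst DY.nn_integral_fst[symmetric]) auto
  also have "\<dots> = (\<integral>\<^sup>+\<omega>. \<integral>\<^sup>+\<omega>'. f (X \<omega>) (Y \<omega>') \<partial>M \<partial>M)"
    by (subst nn_integral_distr) (auto intro!: nn_integral_cong nn_integral_distr)
  finally show ?thesis .
qed

lemma circ_gaussian_law_cgauss:
  assumes "prob_space M" and "cgauss M X chi" and "chi > 0"
  shows "circ_gaussian_law M X chi"
proof -
  interpret prob_space M by fact
  have [measurable]: "X \<in> borel_measurable M"
    and indep: "indep_var borel (\<lambda>\<omega>. Re (X \<omega>)) borel (\<lambda>\<omega>. Im (X \<omega>))"
    and Re_X: "distributed M lborel (\<lambda>\<omega>. Re (X \<omega>)) (gaussian (chi / 2))"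
    and Im_X: "distributed M lborel (\<lambda>\<omega>. Im (X \<omega>)) (gaussian (chi / 2))"
    using assms(2) by (auto simp: cgauss_def gaussian_def[abs_def])
  show ?thesis
    unfolding circ_gaussian_law_def
  proof (intro conjI ballI)
    fix \<Phi> :: "complex \<Rightarrow> ennreal"
    assume [measurable]: "\<Phi> \<in> borel_measurable borel"
    have "(\<integral>\<^sup>+\<omega>. \<Phi> (X \<omega>) \<partial>M) = (\<integral>\<^sup>+\<omega>. \<integral>\<^sup>+\<omega>'. \<Phi> (Complex (Re (X \<omega>)) (Im (X \<omega>'))) \<partial>M \<partial>M)"
      using nn_integral_indep_var[OF indep, of "\<lambda>a b. \<Phi> (Complex a b)"] by simp
    also have "\<dots> = (\<integral>\<^sup>+\<omega>. \<integral>\<^sup>+b. ennreal (gaussian (chi / 2) b) * \<Phi> (Complex (Re (X \<omega>)) b) \<partial>lborel \<partial>M)"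
      by (intro nn_integral_cong distributed_nn_integral[OF Im_X, symmetric]) measurable
    also have "\<dots> = (\<integral>\<^sup>+a. ennreal (gaussian (chi / 2) a) *
        (\<integral>\<^sup>+b. ennreal (gaussian (chi / 2) b) * \<Phi> (Complex a b) \<partial>lborel) \<partial>lborel)"
      by (rule distributed_nn_integral[OF Re_X, symmetric]) measurable
    also have "\<dots> = plane_nn_integral
        (\<lambda>z. \<Phi> z * ennreal (gaussian (chi / 2) (Re z)) * ennreal (gaussian (chi / 2) (Im z)))"
      by (subst plane_nn_integral_product) (auto simp: mult_ac)
    finally show "(\<integral>\<^sup>+\<omega>. \<Phi> (X \<omega>) \<partial>M) = \<dots>" .
  qed (use assms in auto)
qed

lemma gaussian_Re_Im:
  assumes "v > 0"
  shows "ennreal (gaussian v (Re z)) * ennreal (gaussian v (Im z)) =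
    ennreal (exp (- (cmod z)\<^sup>2 / (2 * v)) / (2 * pi * v))"
  using assms by (simp add: ennreal_mult[symmetric] gaussian_mult_gaussian cmod_power2)

lemma circ_gaussian_law_rotate:
  assumes law: "circ_gaussian_law M W chi" and u: "cmod u = 1"
  shows "circ_gaussian_law M (\<lambda>\<omega>. u * W \<omega>) chi"
  unfolding circ_gaussian_law_def
proof (intro conjI ballI)
  have chi: "chi > 0" and [measurable]: "W \<in> borel_measurable M"
    using circ_gaussian_lawD[OF law] by auto
  then show "0 < chi" "(\<lambda>\<omega>. u * W \<omega>) \<in> borel_measurable M"
    by auto
  fix \<Phi> :: "complex \<Rightarrow> ennreal"
  assume [measurable]: "\<Phi> \<in> borel_measurable borel"
  define w where "w z = ennreal (exp (- (cmod z)\<^sup>2 / chi) / (pi * chi))" for z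
  have [measurable]: "w \<in> borel_measurable borel"
    unfolding w_def by measurable
  have density: "ennreal (gaussian (chi / 2) (Re z)) * ennreal (gaussian (chi / 2) (Im z)) = w z" for z
    using gaussian_Re_Im[of "chi / 2" z] chi by (simp add: w_def)
  have "(\<integral>\<^sup>+\<omega>. \<Phi> (u * W \<omega>) \<partial>M) = plane_nn_integral (\<lambda>z. \<Phi> (u * z) * w z)"
    using circ_gaussian_lawD(3)[OF law, of "\<lambda>z. \<Phi> (u * z)"] by (simp add: mult.assoc density)
  also have "\<dots> = plane_nn_integral (\<lambda>z. (\<lambda>z. \<Phi> z * w z) (u * z))"
    using u by (simp add: w_def norm_mult)
  also have "\<dots> = plane_nn_integral (\<lambda>z. \<Phi> z * w z)"
    by (rule plane_nn_integral_rotate) (use u in auto)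
  finally show "(\<integral>\<^sup>+\<omega>. \<Phi> (u * W \<omega>) \<partial>M) = plane_nn_integral
      (\<lambda>z. \<Phi> z * ennreal (gaussian (chi / 2) (Re z)) * ennreal (gaussian (chi / 2) (Im z)))"
    by (simp add: mult.assoc density)
qed

lemma circ_gaussian_law_scale:
  assumes law: "circ_gaussian_law M W chi" and r: "r > 0"
  shows "circ_gaussian_law M (\<lambda>\<omega>. of_real r * W \<omega>) (r\<^sup>2 * chi)"
  unfolding circ_gaussian_law_def
proof (intro conjI ballI)
  have chi: "chi > 0" and [measurable]: "W \<in> borel_measurable M"
    using circ_gaussian_lawD[OF law] by auto
  then show "0 < r\<^sup>2 * chi" "(\<lambda>\<omega>. of_real r * W \<omega>) \<in> borel_measurable M"
    using r by auto
  have v: "chi / 2 > 0" and v': "r\<^sup>2 * chi / 2 = r\<^sup>2 * (chi / 2)"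
    using chi by auto
  fix \<Phi> :: "complex \<Rightarrow> ennreal"
  assume [measurable]: "\<Phi> \<in> borel_measurable borel"
  have "(\<integral>\<^sup>+\<omega>. \<Phi> (of_real r * W \<omega>) \<partial>M) = plane_nn_integral
      (\<lambda>z. \<Phi> (of_real r * z) * ennreal (gaussian (chi / 2) (Re z)) * ennreal (gaussian (chi / 2) (Im z)))"
    by (rule circ_gaussian_lawD(3)[OF law]) measurable
  also have "\<dots> = (\<integral>\<^sup>+a. (\<integral>\<^sup>+b. \<Phi> (Complex (r * a) (r * b)) *
      ennreal (gaussian (chi / 2) b) \<partial>lborel) * ennreal (gaussian (chi / 2) a) \<partial>lborel)"
    by (subst plane_nn_integral_product) (auto simp: complex_of_real_mult_Complex)
  also have "\<dots> = (\<integral>\<^sup>+a. (\<integral>\<^sup>+b. \<Phi> (Complex (r * a) b) *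
      ennreal (gaussian (r\<^sup>2 * chi / 2) b) \<partial>lborel) * ennreal (gaussian (chi / 2) a) \<partial>lborel)"
    unfolding v' using nn_integral_gaussian_scale[OF _ r v, of "\<lambda>b. \<Phi> (Complex (r * a) b)" for a]
    by simp
  also have "\<dots> = (\<integral>\<^sup>+a. (\<integral>\<^sup>+b. \<Phi> (Complex a b) *
      ennreal (gaussian (r\<^sup>2 * chi / 2) b) \<partial>lborel) * ennreal (gaussian (r\<^sup>2 * chi / 2) a) \<partial>lborel)"
    unfolding v' by (rule nn_integral_gaussian_scale[OF _ r v]) measurable
  finally show "(\<integral>\<^sup>+\<omega>. \<Phi> (of_real r * W \<omega>) \<partial>M) = plane_nn_integral
      (\<lambda>z. \<Phi> z * ennreal (gaussian (r\<^sup>2 * chi / 2) (Re z)) * ennreal (gaussian (r\<^sup>2 * chi / 2) (Im z)))"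
    by (subst plane_nn_integral_product) auto
qed

lemma circ_gaussian_law_mult:
  assumes law: "circ_gaussian_law M W chi" and "c \<noteq> 0"
  shows "circ_gaussian_law M (\<lambda>\<omega>. c * W \<omega>) ((cmod c)\<^sup>2 * chi)"
proof -
  have "circ_gaussian_law M (\<lambda>\<omega>. sgn c * (of_real (cmod c) * W \<omega>)) ((cmod c)\<^sup>2 * chi)"
    using assms by (intro circ_gaussian_law_rotate circ_gaussian_law_scale) (auto simp: norm_sgn)
  moreover have "sgn c * of_real (cmod c) = c"
    using \<open>c \<noteq> 0\<close> by (simp add: sgn_eq)
  ultimately show ?thesis
    by (simp add: mult.assoc[symmetric])
qed

lemma circ_gaussian_law_cnj:
  assumes law: "circ_gaussian_law M W chi"
  shows "circ_gaussian_law M (\<lambda>\<omega>. cnj (W \<omega>)) chi"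
  unfolding circ_gaussian_law_def
proof (intro conjI ballI)
  have chi: "chi > 0" and [measurable]: "W \<in> borel_measurable M"
    using circ_gaussian_lawD[OF law] by auto
  then show "0 < chi" "(\<lambda>\<omega>. cnj (W \<omega>)) \<in> borel_measurable M"
    by auto
  fix \<Phi> :: "complex \<Rightarrow> ennreal"
  assume [measurable]: "\<Phi> \<in> borel_measurable borel"
  have "(\<integral>\<^sup>+\<omega>. \<Phi> (cnj (W \<omega>)) \<partial>M) = plane_nn_integral
      (\<lambda>z. \<Phi> (cnj z) * ennreal (gaussian (chi / 2) (Re z)) * ennreal (gaussian (chi / 2) (Im z)))"
    by (rule circ_gaussian_lawD(3)[OF law]) measurable
  also have "\<dots> = (\<integral>\<^sup>+a. (\<integral>\<^sup>+b. \<Phi> (Complex a (- b)) *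
      ennreal (gaussian (chi / 2) b) \<partial>lborel) * ennreal (gaussian (chi / 2) a) \<partial>lborel)"
    by (subst plane_nn_integral_product) (simp_all add: complex_cnj)
  also have "\<dots> = (\<integral>\<^sup>+a. (\<integral>\<^sup>+b. \<Phi> (Complex a b) *
      ennreal (gaussian (chi / 2) b) \<partial>lborel) * ennreal (gaussian (chi / 2) a) \<partial>lborel)"
    using nn_integral_real_affine[of "\<lambda>b. \<Phi> (Complex a b) * ennreal (gaussian (chi / 2) b)" "-1" 0 for a]
    by simp
  finally show "(\<integral>\<^sup>+\<omega>. \<Phi> (cnj (W \<omega>)) \<partial>M) = plane_nn_integral
      (\<lambda>z. \<Phi> z * ennreal (gaussian (chi / 2) (Re z)) * ennreal (gaussian (chi / 2) (Im z)))"
    by (subst plane_nn_integral_product) auto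
qed

lemma nn_integral_weighted_swap:
  assumes [measurable]: "case_prod Q \<in> borel_measurable (lborel \<Otimes>\<^sub>M lborel)"
    "f \<in> borel_measurable borel" "g \<in> borel_measurable borel"
  shows "(\<integral>\<^sup>+y. (\<integral>\<^sup>+x. Q x y * ennreal (f x) \<partial>lborel) * ennreal (g y) \<partial>lborel) =
    (\<integral>\<^sup>+x. (\<integral>\<^sup>+y. Q x y * ennreal (g y) \<partial>lborel) * ennreal (f x) \<partial>lborel)"
proof -
  have "(\<integral>\<^sup>+y. (\<integral>\<^sup>+x. Q x y * ennreal (f x) \<partial>lborel) * ennreal (g y) \<partial>lborel) =
      (\<integral>\<^sup>+y. \<integral>\<^sup>+x. Q x y * ennreal (f x) * ennreal (g y) \<partial>lborel \<partial>lborel)"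
    by (intro nn_integral_cong, subst nn_integral_multc[symmetric]) auto
  also have "\<dots> = (\<integral>\<^sup>+x. \<integral>\<^sup>+y. Q x y * ennreal (f x) * ennreal (g y) \<partial>lborel \<partial>lborel)"
    by (rule lborel_pair.Fubini') measurable
  also have "\<dots> = (\<integral>\<^sup>+x. (\<integral>\<^sup>+y. Q x y * ennreal (g y) \<partial>lborel) * ennreal (f x) \<partial>lborel)"
    by (intro nn_integral_cong, subst nn_integral_multc[symmetric]) (auto simp: mult_ac)
  finally show ?thesis .
qed

lemma plane_nn_integral_gaussian_convolution:
  assumes [measurable]: "\<Phi> \<in> borel_measurable borel" and v1: "v1 > 0" and v2: "v2 > 0"
  shows "plane_nn_integral (\<lambda>s. plane_nn_integral
        (\<lambda>z. \<Phi> (s + z) * ennreal (gaussian v2 (Re z)) * ennreal (gaussian v2 (Im z))) *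
      ennreal (gaussian v1 (Re s)) * ennreal (gaussian v1 (Im s))) =
    plane_nn_integral (\<lambda>z. \<Phi> z * ennreal (gaussian (v1 + v2) (Re z)) * ennreal (gaussian (v1 + v2) (Im z)))"
    (is "?lhs = ?rhs")
proof -
  define Q where "Q a1 a2 b1 = (\<integral>\<^sup>+b2. \<Phi> (Complex (a1 + a2) (b1 + b2)) * ennreal (gaussian v2 b2) \<partial>lborel)"
    for a1 a2 b1
  define K where "K a = (\<integral>\<^sup>+b. \<Phi> (Complex a b) * ennreal (gaussian (v1 + v2) b) \<partial>lborel)" for a
  have [measurable]: "case_prod (Q a1) \<in> borel_measurable (lborel \<Otimes>\<^sub>M lborel)" for a1
    unfolding Q_def by measurable
  have [measurable]: "K \<in> borel_measurable borel"
    unfolding K_def by measurable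
  have inner: "plane_nn_integral (\<lambda>z. \<Phi> (s + z) * ennreal (gaussian v2 (Re z)) * ennreal (gaussian v2 (Im z))) =
      (\<integral>\<^sup>+a2. Q (Re s) a2 (Im s) * ennreal (gaussian v2 a2) \<partial>lborel)" for s
  proof -
    have "s + Complex a b = Complex (Re s + a) (Im s + b)" for a b
      by (simp add: complex_eq_iff)
    then show ?thesis
      unfolding Q_def by (subst plane_nn_integral_product) auto
  qed
  have "?lhs = (\<integral>\<^sup>+a1. (\<integral>\<^sup>+b1. (\<integral>\<^sup>+a2. Q a1 a2 b1 * ennreal (gaussian v2 a2) \<partial>lborel) *
      ennreal (gaussian v1 b1) \<partial>lborel) * ennreal (gaussian v1 a1) \<partial>lborel)"
    unfolding inner Q_def by (subst plane_nn_integral_product) auto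
  also have "\<dots> = (\<integral>\<^sup>+a1. (\<integral>\<^sup>+a2. (\<integral>\<^sup>+b1. Q a1 a2 b1 * ennreal (gaussian v1 b1) \<partial>lborel) *
      ennreal (gaussian v2 a2) \<partial>lborel) * ennreal (gaussian v1 a1) \<partial>lborel)"
  proof -
    have "(\<integral>\<^sup>+b1. (\<integral>\<^sup>+a2. Q a1 a2 b1 * ennreal (gaussian v2 a2) \<partial>lborel) * ennreal (gaussian v1 b1) \<partial>lborel) =
        (\<integral>\<^sup>+a2. (\<integral>\<^sup>+b1. Q a1 a2 b1 * ennreal (gaussian v1 b1) \<partial>lborel) * ennreal (gaussian v2 a2) \<partial>lborel)"
      for a1
      by (rule nn_integral_weighted_swap) measurable
    then show ?thesis
      by simp
  qed
  also have "\<dots> = (\<integral>\<^sup>+a1. (\<integral>\<^sup>+a2. K (a1 + a2) * ennreal (gaussian v2 a2) \<partial>lborel) *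
      ennreal (gaussian v1 a1) \<partial>lborel)"
  proof -
    have "(\<integral>\<^sup>+b1. Q a1 a2 b1 * ennreal (gaussian v1 b1) \<partial>lborel) = K (a1 + a2)" for a1 a2
      unfolding Q_def K_def by (rule nn_integral_gaussian_convolution[OF _ v1 v2]) measurable
    then show ?thesis
      by simp
  qed
  also have "\<dots> = (\<integral>\<^sup>+a. K a * ennreal (gaussian (v1 + v2) a) \<partial>lborel)"
    by (rule nn_integral_gaussian_convolution[OF _ v1 v2]) measurable
  also have "\<dots> = ?rhs"
    unfolding K_def by (subst plane_nn_integral_product) auto
  finally show ?thesis .
qed

lemma circ_gaussian_law_add:
  assumes "prob_space M" and A: "circ_gaussian_law M A chi1" and B: "circ_gaussian_law M B chi2"
    and indep: "prob_space.indep_var M borel A borel B"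
  shows "circ_gaussian_law M (\<lambda>\<omega>. A \<omega> + B \<omega>) (chi1 + chi2)"
  unfolding circ_gaussian_law_def
proof (intro conjI ballI)
  interpret prob_space M by fact
  have chi1: "chi1 > 0" and [measurable]: "A \<in> borel_measurable M"
    using circ_gaussian_lawD[OF A] by auto
  have chi2: "chi2 > 0" and [measurable]: "B \<in> borel_measurable M"
    using circ_gaussian_lawD[OF B] by auto
  show "0 < chi1 + chi2" "(\<lambda>\<omega>. A \<omega> + B \<omega>) \<in> borel_measurable M"
    using chi1 chi2 by auto
  fix \<Phi> :: "complex \<Rightarrow> ennreal"
  assume [measurable]: "\<Phi> \<in> borel_measurable borel"
  define H where "H s = plane_nn_integral
    (\<lambda>z. \<Phi> (s + z) * ennreal (gaussian (chi2 / 2) (Re z)) * ennreal (gaussian (chi2 / 2) (Im z)))" for s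
  have [measurable]: "H \<in> borel_measurable borel"
    unfolding H_def plane_nn_integral_def by measurable
  have "(\<integral>\<^sup>+\<omega>. \<Phi> (A \<omega> + B \<omega>) \<partial>M) = (\<integral>\<^sup>+\<omega>. \<integral>\<^sup>+\<omega>'. \<Phi> (A \<omega> + B \<omega>') \<partial>M \<partial>M)"
    by (rule nn_integral_indep_var[OF indep]) measurable
  also have "\<dots> = (\<integral>\<^sup>+\<omega>. H (A \<omega>) \<partial>M)"
    unfolding H_def by (intro nn_integral_cong circ_gaussian_lawD(3)[OF B]) measurable
  also have "\<dots> = plane_nn_integral
      (\<lambda>s. H s * ennreal (gaussian (chi1 / 2) (Re s)) * ennreal (gaussian (chi1 / 2) (Im s)))"
    by (rule circ_gaussian_lawD(3)[OF A]) measurable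
  also have "\<dots> = plane_nn_integral (\<lambda>z. \<Phi> z * ennreal (gaussian (chi1 / 2 + chi2 / 2) (Re z)) *
      ennreal (gaussian (chi1 / 2 + chi2 / 2) (Im z)))"
    unfolding H_def by (rule plane_nn_integral_gaussian_convolution) (use chi1 chi2 in auto)
  finally show "(\<integral>\<^sup>+\<omega>. \<Phi> (A \<omega> + B \<omega>) \<partial>M) = plane_nn_integral
      (\<lambda>z. \<Phi> z * ennreal (gaussian ((chi1 + chi2) / 2) (Re z)) * ennreal (gaussian ((chi1 + chi2) / 2) (Im z)))"
    by (simp add: add_divide_distrib)
qed

lemma (in prob_space) indep_var_sum:
  fixes X :: "'i \<Rightarrow> 'a \<Rightarrow> 'b :: {second_countable_topology, topological_comm_monoid_add}"
  assumes "finite I" "i \<notin> I" and indep: "indep_vars (\<lambda>_. borel) X (insert i I)"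
  shows "indep_var borel (X i) borel (\<lambda>\<omega>. \<Sum>j\<in>I. X j \<omega>)"
proof -
  have "indep_var borel ((\<lambda>f. f i) \<circ> (\<lambda>\<omega>. restrict (\<lambda>j. X j \<omega>) {i}))
      borel ((\<lambda>f. \<Sum>j\<in>I. f j) \<circ> (\<lambda>\<omega>. restrict (\<lambda>j. X j \<omega>) I))"
    using assms by (intro indep_var_compose[OF indep_var_restrict[OF indep]]) auto
  also have "(\<lambda>f. f i) \<circ> (\<lambda>\<omega>. restrict (\<lambda>j. X j \<omega>) {i}) = X i"
    by auto
  also have "(\<lambda>f. \<Sum>j\<in>I. f j) \<circ> (\<lambda>\<omega>. restrict (\<lambda>j. X j \<omega>) I) = (\<lambda>\<omega>. \<Sum>j\<in>I. X j \<omega>)"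
    by (auto cong: rev_conj_cong)
  finally show ?thesis .
qed

lemma circ_gaussian_law_sum:
  assumes "prob_space M" and "finite I" "I \<noteq> {}"
    and indep: "prob_space.indep_vars M (\<lambda>_. borel) X I"
    and laws: "\<And>i. i \<in> I \<Longrightarrow> circ_gaussian_law M (X i) (chi i)"
  shows "circ_gaussian_law M (\<lambda>\<omega>. \<Sum>i\<in>I. X i \<omega>) (\<Sum>i\<in>I. chi i)"
  using \<open>finite I\<close> \<open>I \<noteq> {}\<close> indep laws
proof (induction I rule: finite_ne_induct)
  case (singleton i)
  then show ?case
    by simp
next
  case (insert i I)
  interpret prob_space M by fact
  have "indep_vars (\<lambda>_. borel) X I"
    using insert.prems(1) by (rule indep_vars_subset) auto
  then have "circ_gaussian_law M (\<lambda>\<omega>. \<Sum>j\<in>I. X j \<omega>) (\<Sum>j\<in>I. chi j)"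
    using insert.IH insert.prems(2) by blast
  then have "circ_gaussian_law M (\<lambda>\<omega>. X i \<omega> + (\<Sum>j\<in>I. X j \<omega>)) (chi i + (\<Sum>j\<in>I. chi j))"
    using insert by (intro circ_gaussian_law_add[OF assms(1)] indep_var_sum) auto
  then show ?case
    using insert.hyps by simp
qed

section \<open>Integrals of radial functions\<close>

lemma nn_integral_indicator_Icc_LIMSEQ:
  fixes h :: "real \<Rightarrow> real"
  assumes [measurable]: "h \<in> borel_measurable borel" and nonneg: "\<And>x. 0 \<le> x \<Longrightarrow> 0 \<le> h x"
    and "incseq b" and "filterlim b at_top sequentially"
  shows "(\<lambda>n. \<integral>\<^sup>+x. ennreal (h x * indicator {0..b n} x) \<partial>lborel) \<longlonglongrightarrow>
    (\<integral>\<^sup>+x. ennreal (h x * indicator {0..} x) \<partial>lborel)"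
proof (rule nn_integral_LIMSEQ)
  show "incseq (\<lambda>n x. ennreal (h x * indicator {0..b n} x))"
    using \<open>incseq b\<close> nonneg
    by (auto simp: incseq_def le_fun_def indicator_def intro!: ennreal_leI dest: order_trans)
  fix x
  have "\<forall>\<^sub>F n in sequentially. x \<le> b n"
    using \<open>filterlim b at_top sequentially\<close> by (simp add: filterlim_at_top)
  then have "\<forall>\<^sub>F n in sequentially. ennreal (h x * indicator {0..b n} x) = ennreal (h x * indicator {0..} x)"
    by eventually_elim (auto simp: indicator_def)
  then show "(\<lambda>n. ennreal (h x * indicator {0..b n} x)) \<longlonglongrightarrow> ennreal (h x * indicator {0..} x)"
    by (rule tendsto_eventually)
qed measurable

lemma nn_integral_square_substitution:
  fixes \<Psi> :: "real \<Rightarrow> real"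
  assumes [measurable]: "\<Psi> \<in> borel_measurable borel" and k: "k > 0" and nonneg: "\<And>x. 0 \<le> \<Psi> x"
  shows "(\<integral>\<^sup>+x. ennreal (2 * k * x * \<Psi> (k * x\<^sup>2) * indicator {0..} x) \<partial>lborel) =
    (\<integral>\<^sup>+r. ennreal (\<Psi> r * indicator {0..} r) \<partial>lborel)"
proof (rule LIMSEQ_unique)
  have "(\<integral>\<^sup>+r. ennreal (\<Psi> r * indicator {0..k * b\<^sup>2} r) \<partial>lborel) =
      (\<integral>\<^sup>+x. ennreal (2 * k * x * \<Psi> (k * x\<^sup>2) * indicator {0..b} x) \<partial>lborel)" if "0 \<le> b" for b
  proof -
    have "(\<integral>\<^sup>+r. ennreal (\<Psi> r * indicator {0..k * b\<^sup>2} r) \<partial>lborel) =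
        (\<integral>\<^sup>+r. ennreal (\<Psi> r * indicator {(\<lambda>x. k * x\<^sup>2) 0..(\<lambda>x. k * x\<^sup>2) b} r) \<partial>lborel)"
      by simp
    also have "\<dots> = (\<integral>\<^sup>+x. ennreal (\<Psi> (k * x\<^sup>2) * (2 * k * x) * indicator {0..b} x) \<partial>lborel)"
      using that k
      by (intro nn_integral_substitution[where g' = "\<lambda>x. 2 * k * x"])
        (auto intro!: derivative_eq_intros continuous_intros simp: set_borel_measurable_def)
    finally show ?thesis
      by (simp add: mult_ac)
  qed
  then have "(\<lambda>n. \<integral>\<^sup>+x. ennreal (2 * k * x * \<Psi> (k * x\<^sup>2) * indicator {0..real n} x) \<partial>lborel) =
      (\<lambda>n. \<integral>\<^sup>+r. ennreal (\<Psi> r * indicator {0..k * (real n)\<^sup>2} r) \<partial>lborel)"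
    by simp
  moreover have "(\<lambda>n. \<integral>\<^sup>+r. ennreal (\<Psi> r * indicator {0..k * (real n)\<^sup>2} r) \<partial>lborel) \<longlonglongrightarrow>
      (\<integral>\<^sup>+r. ennreal (\<Psi> r * indicator {0..} r) \<partial>lborel)"
  proof (rule nn_integral_indicator_Icc_LIMSEQ)
    show "incseq (\<lambda>n. k * (real n)\<^sup>2)"
      using k by (auto simp: incseq_def intro!: mult_left_mono power_mono)
    show "filterlim (\<lambda>n. k * (real n)\<^sup>2) at_top sequentially"
      using k by real_asymp
  qed (auto simp: nonneg)
  ultimately show "(\<lambda>n. \<integral>\<^sup>+x. ennreal (2 * k * x * \<Psi> (k * x\<^sup>2) * indicator {0..real n} x) \<partial>lborel) \<longlonglongrightarrow>
      (\<integral>\<^sup>+r. ennreal (\<Psi> r * indicator {0..} r) \<partial>lborel)"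
    by simp
  show "(\<lambda>n. \<integral>\<^sup>+x. ennreal (2 * k * x * \<Psi> (k * x\<^sup>2) * indicator {0..real n} x) \<partial>lborel) \<longlonglongrightarrow>
      (\<integral>\<^sup>+x. ennreal (2 * k * x * \<Psi> (k * x\<^sup>2) * indicator {0..} x) \<partial>lborel)"
    using k nonneg
    by (intro nn_integral_indicator_Icc_LIMSEQ filterlim_real_sequentially) (auto simp: incseq_def)
qed

lemma nn_integral_abs_mult_square:
  fixes \<Psi> :: "real \<Rightarrow> real"
  assumes [measurable]: "\<Psi> \<in> borel_measurable borel" and k: "k > 0" and nonneg: "\<And>x. 0 \<le> \<Psi> x"
  shows "(\<integral>\<^sup>+x. ennreal (\<bar>x\<bar> * \<Psi> (k * x\<^sup>2)) \<partial>lborel) =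
    ennreal (1 / k) * (\<integral>\<^sup>+r. ennreal (\<Psi> r * indicator {0..} r) \<partial>lborel)"
proof -
  define P where "P = (\<integral>\<^sup>+x. ennreal (x * \<Psi> (k * x\<^sup>2) * indicator {0..} x) \<partial>lborel)"
  have split: "ennreal (\<bar>x\<bar> * \<Psi> (k * x\<^sup>2)) = ennreal (x * \<Psi> (k * x\<^sup>2) * indicator {0..} x) +
      ennreal ((- x) * \<Psi> (k * (- x)\<^sup>2) * indicator {0..} (- x))" for x
    using nonneg[of "k * x\<^sup>2"] by (cases "x > 0"; cases "x = 0") (auto simp: indicator_def)
  have "(\<integral>\<^sup>+x. ennreal (\<bar>x\<bar> * \<Psi> (k * x\<^sup>2)) \<partial>lborel) =
      P + (\<integral>\<^sup>+x. ennreal ((- x) * \<Psi> (k * (- x)\<^sup>2) * indicator {0..} (- x)) \<partial>lborel)"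
    unfolding split P_def by (rule nn_integral_add) auto
  also have "(\<integral>\<^sup>+x. ennreal ((- x) * \<Psi> (k * (- x)\<^sup>2) * indicator {0..} (- x)) \<partial>lborel) = P"
    unfolding P_def
    using nn_integral_real_affine[of "\<lambda>x. ennreal (x * \<Psi> (k * x\<^sup>2) * indicator {0..} x)" "-1" 0] by simp
  finally have abs: "(\<integral>\<^sup>+x. ennreal (\<bar>x\<bar> * \<Psi> (k * x\<^sup>2)) \<partial>lborel) = 2 * P"
    by (simp add: mult_2)
  have "(\<integral>\<^sup>+r. ennreal (\<Psi> r * indicator {0..} r) \<partial>lborel) =
      (\<integral>\<^sup>+x. ennreal (2 * k) * ennreal (x * \<Psi> (k * x\<^sup>2) * indicator {0..} x) \<partial>lborel)"
    using k by (simp add: nn_integral_square_substitution[symmetric] ennreal_mult'[symmetric] mult_ac nonneg)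
  also have "\<dots> = ennreal (2 * k) * P"
    unfolding P_def by (rule nn_integral_cmult) measurable
  finally have J: "(\<integral>\<^sup>+r. ennreal (\<Psi> r * indicator {0..} r) \<partial>lborel) = ennreal (2 * k) * P" .
  have "ennreal (1 / k) * ennreal (2 * k) = 2"
    using k by (simp add: ennreal_mult[symmetric])
  then show ?thesis
    unfolding abs J by (simp add: mult.assoc[symmetric])
qed

lemma nn_integral_inverse_1_plus_square:
  "(\<integral>\<^sup>+t. ennreal (1 / (1 + t\<^sup>2)) \<partial>lborel) = ennreal pi"
proof -
  have "integrable lborel (\<lambda>t::real. inverse (1 + t\<^sup>2))"
    using integrable_inverse_1_plus_square unfolding set_integrable_def einterval_def by simp
  then have "(\<integral>\<^sup>+t. ennreal (inverse (1 + t\<^sup>2)) \<partial>lborel) = ennreal (LBINT t::real. inverse (1 + t\<^sup>2))"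
    by (rule nn_integral_eq_integral) (auto simp: add_pos_nonneg)
  also have "(LBINT t::real. inverse (1 + t\<^sup>2)) = pi"
    using LBINT_inverse_1_plus_square
    by (simp add: interval_lebesgue_integral_def set_lebesgue_integral_def einterval_def)
  finally show ?thesis
    by (simp add: inverse_eq_divide)
qed

text \<open>Polar coordinates without the polar map: substituting b = a t in the inner integral turns
  \<Psi> (a^2 + b^2) into |a| \<Psi> ((1 + t^2) a^2), and the integral of 1 / (1 + t^2) is \<pi>.\<close>
lemma nn_integral_radial:
  fixes \<Psi> :: "real \<Rightarrow> real"
  assumes [measurable]: "\<Psi> \<in> borel_measurable borel" and nonneg: "\<And>x. 0 \<le> \<Psi> x"
  shows "(\<integral>\<^sup>+a. \<integral>\<^sup>+b. ennreal (\<Psi> (a\<^sup>2 + b\<^sup>2)) \<partial>lborel \<partial>lborel) =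
    ennreal pi * (\<integral>\<^sup>+r. ennreal (\<Psi> r * indicator {0..} r) \<partial>lborel)"
proof -
  define J where "J = (\<integral>\<^sup>+r. ennreal (\<Psi> r * indicator {0..} r) \<partial>lborel)"
  have "AE a in lborel. (\<integral>\<^sup>+b. ennreal (\<Psi> (a\<^sup>2 + b\<^sup>2)) \<partial>lborel) =
      (\<integral>\<^sup>+t. ennreal (\<bar>a\<bar> * \<Psi> ((1 + t\<^sup>2) * a\<^sup>2)) \<partial>lborel)"
    using AE_lborel_singleton[of 0]
  proof eventually_elim
    case (elim a)
    have "(\<integral>\<^sup>+b. ennreal (\<Psi> (a\<^sup>2 + b\<^sup>2)) \<partial>lborel) =
        ennreal \<bar>a\<bar> * (\<integral>\<^sup>+t. ennreal (\<Psi> (a\<^sup>2 + (a * t)\<^sup>2)) \<partial>lborel)"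
      using nn_integral_real_affine[of "\<lambda>b. ennreal (\<Psi> (a\<^sup>2 + b\<^sup>2))" a 0] elim by simp
    also have "\<dots> = (\<integral>\<^sup>+t. ennreal (\<bar>a\<bar> * \<Psi> ((1 + t\<^sup>2) * a\<^sup>2)) \<partial>lborel)"
      by (subst nn_integral_cmult[symmetric]) (auto simp: ennreal_mult' algebra_simps power_mult_distrib)
    finally show ?case .
  qed
  then have "(\<integral>\<^sup>+a. \<integral>\<^sup>+b. ennreal (\<Psi> (a\<^sup>2 + b\<^sup>2)) \<partial>lborel \<partial>lborel) =
      (\<integral>\<^sup>+a. \<integral>\<^sup>+t. ennreal (\<bar>a\<bar> * \<Psi> ((1 + t\<^sup>2) * a\<^sup>2)) \<partial>lborel \<partial>lborel)"
    by (rule nn_integral_cong_AE)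
  also have "\<dots> = (\<integral>\<^sup>+t. \<integral>\<^sup>+a. ennreal (\<bar>a\<bar> * \<Psi> ((1 + t\<^sup>2) * a\<^sup>2)) \<partial>lborel \<partial>lborel)"
    by (rule lborel_pair.Fubini'[symmetric]) measurable
  also have "\<dots> = (\<integral>\<^sup>+t. ennreal (1 / (1 + t\<^sup>2)) * J \<partial>lborel)"
    unfolding J_def by (intro nn_integral_cong nn_integral_abs_mult_square) (auto simp: nonneg add_pos_nonneg)
  also have "\<dots> = ennreal pi * J"
    by (subst nn_integral_multc) (auto simp: nn_integral_inverse_1_plus_square)
  finally show ?thesis
    unfolding J_def .
qed

lemma circ_gaussian_law_nn_integral_norm_sq:
  assumes law: "circ_gaussian_law M Z chi" and [measurable]: "f \<in> borel_measurable borel"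
    and nonneg: "\<And>x. 0 \<le> x \<Longrightarrow> 0 \<le> f x"
  shows "(\<integral>\<^sup>+\<omega>. ennreal (f ((cmod (Z \<omega>))\<^sup>2)) \<partial>M) =
    (\<integral>\<^sup>+y. ennreal (f (chi * y) * exponential_density 1 y) \<partial>lborel)"
proof -
  have chi: "chi > 0" and [measurable]: "Z \<in> borel_measurable M"
    using circ_gaussian_lawD[OF law] by auto
  define \<Psi> where "\<Psi> r = f (max r 0) * (exp (- r / chi) / (pi * chi))" for r
  have [measurable]: "\<Psi> \<in> borel_measurable borel"
    unfolding \<Psi>_def by measurable
  have \<Psi>_nonneg: "0 \<le> \<Psi> r" for r
    unfolding \<Psi>_def using chi nonneg by simp
  have density: "ennreal (f ((cmod (Complex a b))\<^sup>2)) * ennreal (gaussian (chi / 2) a) *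
      ennreal (gaussian (chi / 2) b) = ennreal (\<Psi> (a\<^sup>2 + b\<^sup>2))" for a b
    using gaussian_Re_Im[of "chi / 2" "Complex a b"] chi nonneg[of "a\<^sup>2 + b\<^sup>2"]
    by (simp add: \<Psi>_def mult.assoc ennreal_mult'[symmetric] cmod_power2 max_absorb1)
  have rescale: "ennreal (pi * chi) * ennreal (\<Psi> (chi * y) * indicator {0..} (chi * y)) =
      ennreal (f (chi * y) * exponential_density 1 y)" for y
    using chi by (cases "y < 0") (auto simp: \<Psi>_def exponential_density_def indicator_def
        zero_le_mult_iff ennreal_mult'[symmetric] max_absorb1)
  have "(\<integral>\<^sup>+\<omega>. ennreal (f ((cmod (Z \<omega>))\<^sup>2)) \<partial>M) = (\<integral>\<^sup>+a. \<integral>\<^sup>+b. ennreal (\<Psi> (a\<^sup>2 + b\<^sup>2)) \<partial>lborel \<partial>lborel)"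
    using circ_gaussian_lawD(3)[OF law, of "\<lambda>z. ennreal (f ((cmod z)\<^sup>2))"]
    by (simp add: plane_nn_integral_def density)
  also have "\<dots> = ennreal pi * (\<integral>\<^sup>+r. ennreal (\<Psi> r * indicator {0..} r) \<partial>lborel)"
    by (rule nn_integral_radial) (auto simp: \<Psi>_nonneg)
  also have "\<dots> = ennreal pi * (ennreal chi * (\<integral>\<^sup>+y. ennreal (\<Psi> (chi * y) * indicator {0..} (chi * y)) \<partial>lborel))"
    using nn_integral_real_affine[of "\<lambda>r. ennreal (\<Psi> r * indicator {0..} r)" chi 0] chi by simp
  also have "\<dots> = (\<integral>\<^sup>+y. ennreal (pi * chi) * ennreal (\<Psi> (chi * y) * indicator {0..} (chi * y)) \<partial>lborel)"
    using chi by (subst nn_integral_cmult) (auto simp: ennreal_mult mult.assoc)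
  also have "\<dots> = (\<integral>\<^sup>+y. ennreal (f (chi * y) * exponential_density 1 y) \<partial>lborel)"
    by (simp only: rescale)
  finally show ?thesis .
qed

section \<open>The divergence and its mean under an exponential law\<close>

text \<open>kl_gauss \<gamma> = KL(CN(0, \<sigma>^2) || CN(0, (1 + \<gamma>) \<sigma>^2)) for every \<sigma>; the divergence D of the
  statement is L kl_gauss (P_a X / \<sigma>_w^2).\<close>
definition kl_gauss :: "real \<Rightarrow> real" where
  "kl_gauss x = ln (1 + x) - x / (x + 1)"

lemma borel_measurable_kl_gauss [measurable]: "kl_gauss \<in> borel_measurable borel"
  unfolding kl_gauss_def by measurable

lemma kl_gauss_0 [simp]: "kl_gauss 0 = 0"
  by (simp add: kl_gauss_def)

lemma kl_gauss_strict_mono: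
  assumes "0 \<le> x" "x < y"
  shows "kl_gauss x < kl_gauss y"
proof (rule DERIV_pos_imp_increasing_open[OF \<open>x < y\<close>])
  fix z
  assume "x < z" "z < y"
  then have z: "z > 0"
    using assms by simp
  have "DERIV kl_gauss z :> 1 / (1 + z) - ((z + 1) - z) / (z + 1)\<^sup>2"
    unfolding kl_gauss_def[abs_def] using z
    by (auto intro!: derivative_eq_intros simp: power2_eq_square field_simps)
  moreover have "1 / (1 + z) - ((z + 1) - z) / (z + 1)\<^sup>2 = z / (z + 1)\<^sup>2"
  proof -
    have "1 / (1 + z) = (z + 1) / (z + 1)\<^sup>2"
      using z by (simp add: power2_eq_square add.commute)
    then show ?thesis
      by (simp add: diff_divide_distrib[symmetric])
  qed
  ultimately show "\<exists>d. DERIV kl_gauss z :> d \<and> d > 0"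
    using z by auto
next
  show "continuous_on {x..y} kl_gauss"
    unfolding kl_gauss_def[abs_def] using assms by (intro continuous_intros) auto
qed

lemma kl_gauss_mono: "0 \<le> x \<Longrightarrow> x \<le> y \<Longrightarrow> kl_gauss x \<le> kl_gauss y"
  using kl_gauss_strict_mono[of x y] by (cases "x = y") auto

lemma kl_gauss_nonneg: "0 \<le> x \<Longrightarrow> 0 \<le> kl_gauss x"
  using kl_gauss_mono[of 0 x] by simp

lemma interval_lebesgue_integrable_Ioi:
  "interval_lebesgue_integrable lborel (ereal a) \<infinity> f \<longleftrightarrow> set_integrable lborel {a<..} f"
  by (simp add: interval_lebesgue_integrable_def)

lemma interval_integral_FTC_nonneg_Ioi:
  fixes f F :: "real \<Rightarrow> real"
  assumes F: "\<And>x. a < x \<Longrightarrow> DERIV F x :> f x" and f: "\<And>x. a < x \<Longrightarrow> isCont f x"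
    and nonneg: "\<And>x. a < x \<Longrightarrow> 0 \<le> f x"
    and A: "(F \<longlongrightarrow> A) (at_right a)" and B: "(F \<longlongrightarrow> B) at_top"
  shows "interval_lebesgue_integrable lborel (ereal a) \<infinity> f"
    and "(LBINT x = ereal a..\<infinity>. f x) = B - A"
proof -
  have A': "((F \<circ> real_of_ereal) \<longlongrightarrow> A) (at_right (ereal a))"
    using A by (simp add: ereal_tendsto_simps1)
  have B': "((F \<circ> real_of_ereal) \<longlongrightarrow> B) (at_left \<infinity>)"
    using B by (simp add: ereal_tendsto_simps1)
  have "set_integrable lborel (einterval (ereal a) \<infinity>) f"
    by (rule interval_integral_FTC_nonneg(1)[OF _ _ _ _ A' B']) (auto intro: F f nonneg)
  then show "interval_lebesgue_integrable lborel (ereal a) \<infinity> f"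
    by (simp add: interval_lebesgue_integrable_def)
  show "(LBINT x = ereal a..\<infinity>. f x) = B - A"
    by (rule interval_integral_FTC_nonneg(2)[OF _ _ _ _ A' B']) (auto intro: F f nonneg)
qed

lemma interval_integral_FTC_integrable_Ioi:
  fixes f F :: "real \<Rightarrow> real"
  assumes F: "\<And>x. a < x \<Longrightarrow> DERIV F x :> f x" and f: "\<And>x. a < x \<Longrightarrow> isCont f x"
    and integrable: "interval_lebesgue_integrable lborel (ereal a) \<infinity> f"
    and A: "(F \<longlongrightarrow> A) (at_right a)" and B: "(F \<longlongrightarrow> B) at_top"
  shows "(LBINT x = ereal a..\<infinity>. f x) = B - A"
proof -
  have A': "((F \<circ> real_of_ereal) \<longlongrightarrow> A) (at_right (ereal a))"
    using A by (simp add: ereal_tendsto_simps1)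
  have B': "((F \<circ> real_of_ereal) \<longlongrightarrow> B) (at_left \<infinity>)"
    using B by (simp add: ereal_tendsto_simps1)
  show ?thesis
    by (rule interval_integral_FTC_integrable[OF _ _ _ _ A' B'])
      (use integrable in \<open>auto intro: F f simp: interval_lebesgue_integrable_Ioi
        has_real_derivative_iff_has_vector_derivative[symmetric]\<close>)
qed

lemma interval_integral_exp_minus:
  shows "interval_lebesgue_integrable lborel (ereal a) \<infinity> (\<lambda>w. exp (- w))"
    and "(LBINT w = ereal a..\<infinity>. exp (- w)) = exp (- a)"
proof -
  have at_a: "((\<lambda>w. - exp (- w)) \<longlongrightarrow> - exp (- a)) (at_right a)"
    by (intro tendsto_intros)
  have at_top: "((\<lambda>w::real. - exp (- w)) \<longlongrightarrow> 0) at_top"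
    by real_asymp
  note FTC = interval_integral_FTC_nonneg_Ioi[where F = "\<lambda>w. - exp (- w)", OF _ _ _ at_a at_top]
  show "interval_lebesgue_integrable lborel (ereal a) \<infinity> (\<lambda>w. exp (- w))"
    by (rule FTC(1)) (auto intro!: derivative_eq_intros)
  show "(LBINT w = ereal a..\<infinity>. exp (- w)) = exp (- a)"
    by (subst FTC(2)) (auto intro!: derivative_eq_intros)
qed

lemma interval_integrable_mult_exp_minus:
  assumes "a \<ge> 0"
  shows "interval_lebesgue_integrable lborel (ereal a) \<infinity> (\<lambda>w. w * exp (- w))"
proof (rule interval_integral_FTC_nonneg_Ioi(1)[where F = "\<lambda>w. - ((w + 1) * exp (- w))"])
  show "((\<lambda>w. - ((w + 1) * exp (- w))) \<longlongrightarrow> - ((a + 1) * exp (- a))) (at_right a)"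
    by (intro tendsto_intros)
  show "((\<lambda>w::real. - ((w + 1) * exp (- w))) \<longlongrightarrow> 0) at_top"
    by real_asymp
qed (use assms in \<open>auto intro!: derivative_eq_intros simp: algebra_simps\<close>)

lemma set_borel_measurable_Ioi:
  fixes f :: "real \<Rightarrow> real"
  assumes [measurable]: "f \<in> borel_measurable borel"
  shows "set_borel_measurable lborel {a<..} f"
proof -
  have "(\<lambda>x. indicator {a<..} x *\<^sub>R f x) = (\<lambda>x. if a < x then f x else 0)"
    by (auto simp: indicator_def)
  then show ?thesis
    unfolding set_borel_measurable_def by simp
qed

lemma interval_integrable_exp_minus_divide:
  assumes "a > 0"
  shows "interval_lebesgue_integrable lborel (ereal a) \<infinity> (\<lambda>w. exp (- w) / w)"
  unfolding interval_lebesgue_integrable_Ioi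
proof (rule set_integrable_bound)
  show "set_integrable lborel ({a<..}) (\<lambda>w. exp (- w) / a)"
    using interval_integral_exp_minus(1)[of a] by (simp add: interval_lebesgue_integrable_Ioi)
  show "AE w in lborel. w \<in> {a<..} \<longrightarrow> norm (exp (- w) / w) \<le> norm (exp (- w) / a)"
    using assms by (auto intro!: divide_left_mono)
qed (rule set_borel_measurable_Ioi, measurable)

lemma interval_integrable_exp_minus_ln:
  assumes t: "t > 0"
  shows "interval_lebesgue_integrable lborel (ereal (1 / t)) \<infinity> (\<lambda>w. exp (- w) * ln (t * w))"
  unfolding interval_lebesgue_integrable_Ioi
proof (rule set_integrable_bound)
  show "set_integrable lborel ({1 / t<..}) (\<lambda>w. t * (w * exp (- w)))"
    using interval_integrable_mult_exp_minus[of "1 / t"] t by (simp add: interval_lebesgue_integrable_Ioi)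
  show "AE w in lborel. w \<in> {1 / t<..} \<longrightarrow>
      norm (exp (- w) * ln (t * w)) \<le> norm (t * (w * exp (- w)))"
  proof (intro AE_I2 impI)
    fix w
    assume w: "w \<in> {1 / t<..}"
    have "0 < 1 / t"
      using t by simp
    moreover have "1 / t < w"
      using w by simp
    ultimately have "0 < w"
      by linarith
    have "1 < t * w"
      using w t by (simp add: field_simps)
    then have "0 \<le> ln (t * w)" "ln (t * w) \<le> t * w"
      using ln_le_minus_one[of "t * w"] by auto
    then show "norm (exp (- w) * ln (t * w)) \<le> norm (t * (w * exp (- w)))"
      using t \<open>0 < w\<close> by (simp add: abs_mult mult_right_mono mult.commute mult.left_commute)
  qed
qed (rule set_borel_measurable_Ioi, measurable)

lemma E1_eq_interval_integral_exp_minus_ln: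
  assumes t: "t > 0"
  shows "E1 (1 / t) = (LBINT w = ereal (1 / t)..\<infinity>. exp (- w) * ln (t * w))"
proof -
  define a where "a = 1 / t"
  have a: "a > 0" and ta: "t * a = 1"
    using t by (auto simp: a_def)
  note integrable_ln = interval_integrable_exp_minus_ln[OF t, folded a_def]
  note integrable_divide = interval_integrable_exp_minus_divide[OF a]
  have "(LBINT w = ereal a..\<infinity>. exp (- w) * ln (t * w) - exp (- w) / w) = 0 - 0"
  proof (rule interval_integral_FTC_integrable_Ioi[where F = "\<lambda>w. - exp (- w) * ln (t * w)"])
    fix w
    assume "a < w"
    then have "w > 0"
      using a by simp
    then show "DERIV (\<lambda>w. - exp (- w) * ln (t * w)) w :> exp (- w) * ln (t * w) - exp (- w) / w"
      using t by (auto intro!: derivative_eq_intros simp: field_simps)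
    show "isCont (\<lambda>w. exp (- w) * ln (t * w) - exp (- w) / w) w"
      using \<open>w > 0\<close> t by (intro continuous_intros) auto
  next
    show "interval_lebesgue_integrable lborel (ereal a) \<infinity> (\<lambda>w. exp (- w) * ln (t * w) - exp (- w) / w)"
      using integrable_ln integrable_divide by (rule interval_lebesgue_integral_diff(1))
    have "((\<lambda>w. - exp (- w) * ln (t * w)) \<longlongrightarrow> - exp (- a) * ln (t * a)) (at_right a)"
      using ta by (intro tendsto_intros) auto
    then show "((\<lambda>w. - exp (- w) * ln (t * w)) \<longlongrightarrow> 0) (at_right a)"
      using ta by simp
    show "((\<lambda>w. - exp (- w) * ln (t * w)) \<longlongrightarrow> 0) at_top"
      using t by real_asymp
  qed
  then show ?thesis
    unfolding E1_def a_def[symmetric]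
    by (simp add: interval_lebesgue_integral_diff(2)[OF integrable_ln integrable_divide])
qed

lemma kl_gauss_minus_one: "x > 0 \<Longrightarrow> kl_gauss (x - 1) = ln x - 1 + 1 / x"
  by (simp add: kl_gauss_def field_simps)

lemma nn_integral_Ioi_eq_interval_integral:
  fixes K :: "real \<Rightarrow> real"
  assumes "interval_lebesgue_integrable lborel (ereal a) \<infinity> K" and "\<And>w. a < w \<Longrightarrow> 0 \<le> K w"
  shows "(\<integral>\<^sup>+w. ennreal (indicator {a<..} w * K w) \<partial>lborel) = ennreal (LBINT w = ereal a..\<infinity>. K w)"
proof -
  have "(\<integral>\<^sup>+w. ennreal (indicator {a<..} w * K w) \<partial>lborel) = ennreal (LBINT w. indicator {a<..} w * K w)"
    using assms
    by (intro nn_integral_eq_integral)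
      (auto simp: interval_lebesgue_integrable_Ioi set_integrable_def indicator_def)
  then show ?thesis
    by (simp add: interval_lebesgue_integral_def set_lebesgue_integral_def)
qed

definition mean_kl_gauss :: "real \<Rightarrow> real" where
  "mean_kl_gauss t = (1 + 1 / t) * exp (1 / t) * E1 (1 / t) - 1"

text \<open>The shift w = y + 1/t turns kl_gauss (t y) e^(-y) into e^(1/t) (ln (t w) - 1 + 1/(t w)) e^(-w);
  integrating e^(-w) ln (t w) by parts yields a second E1 (1/t).\<close>
lemma nn_integral_kl_gauss_exponential:
  assumes t: "t > 0"
  shows "(\<integral>\<^sup>+y. ennreal (kl_gauss (t * y) * exponential_density 1 y) \<partial>lborel) = ennreal (mean_kl_gauss t)"
proof -
  define a where "a = 1 / t"
  have a: "a > 0" and ta: "t * a = 1"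
    using t by (auto simp: a_def)
  define K where "K w = exp a * (exp (- w) * ln (t * w) - exp (- w) + a * (exp (- w) / w))" for w
  have K: "K w = kl_gauss (t * w - 1) * exp (- (w - a))" if "a < w" for w
  proof -
    have "0 < w"
      using that a by simp
    then have kl: "kl_gauss (t * w - 1) = ln (t * w) - 1 + a / w"
      using t by (simp add: kl_gauss_minus_one a_def)
    show ?thesis
      unfolding K_def kl using \<open>0 < w\<close> by (simp add: exp_diff exp_minus field_simps)
  qed
  have shifted: "kl_gauss (t * (w - a)) * exponential_density 1 (w - a) = indicator {a<..} w * K w" for w
    using K[of w] ta by (cases "a < w"; cases "a = w") (auto simp: exponential_density_def algebra_simps exp_minus)
  note integrable_ln = interval_integrable_exp_minus_ln[OF t, folded a_def]
    and integrable_exp = interval_integral_exp_minus(1)[of a]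
    and integrable_divide = interval_integrable_exp_minus_divide[OF a]
  have integrable: "interval_lebesgue_integrable lborel (ereal a) \<infinity> K"
    unfolding K_def using integrable_ln integrable_exp integrable_divide
    by (intro interval_lebesgue_integrable_mult_right interval_lebesgue_integral_add(1)
        interval_lebesgue_integral_diff(1))
  have "(\<integral>\<^sup>+y. ennreal (kl_gauss (t * y) * exponential_density 1 y) \<partial>lborel) =
      (\<integral>\<^sup>+w. ennreal (indicator {a<..} w * K w) \<partial>lborel)"
    using nn_integral_real_affine[of "\<lambda>y. ennreal (kl_gauss (t * y) * exponential_density 1 y)" 1 "- a"]
    by (simp add: shifted)
  also have "\<dots> = ennreal (LBINT w = ereal a..\<infinity>. K w)"
    using K t by (intro nn_integral_Ioi_eq_interval_integral integrable)
      (auto intro!: mult_nonneg_nonneg kl_gauss_nonneg simp: a_def field_simps)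
  also have "(LBINT w = ereal a..\<infinity>. K w) = exp a * ((LBINT w = ereal a..\<infinity>. exp (- w) * ln (t * w)) -
      (LBINT w = ereal a..\<infinity>. exp (- w)) + a * (LBINT w = ereal a..\<infinity>. exp (- w) / w))"
    unfolding K_def
    by (simp only: interval_lebesgue_integral_mult_right
        interval_lebesgue_integral_add(2)[OF interval_lebesgue_integral_diff(1) interval_lebesgue_integrable_mult_right]
        interval_lebesgue_integral_diff(2) integrable_ln integrable_exp integrable_divide)
  also have "\<dots> = exp a * (E1 a - exp (- a) + a * E1 a)"
    by (simp add: E1_eq_interval_integral_exp_minus_ln[OF t, folded a_def, symmetric] E1_def[symmetric]
        interval_integral_exp_minus(2))
  also have "\<dots> = mean_kl_gauss t"
    by (simp add: mean_kl_gauss_def a_def exp_minus field_simps)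
  finally show ?thesis .
qed

lemma not_AE_lborel_nonpos: "\<not> (AE x in lborel. (x::real) \<le> 0)"
proof
  assume "AE x in lborel. (x::real) \<le> 0"
  then obtain N where N: "{x. \<not> x \<le> (0::real)} \<subseteq> N" "N \<in> sets lborel" "emeasure lborel N = 0"
    by (auto elim!: AE_E)
  then have "emeasure lborel {1..2::real} \<le> emeasure lborel N"
    by (intro emeasure_mono) auto
  with N(3) show False
    by simp
qed

lemma ennreal_mean_kl_gauss_strict_mono:
  assumes "0 < s" "s < t"
  shows "ennreal (mean_kl_gauss s) < ennreal (mean_kl_gauss t)"
proof -
  define f where "f u y = ennreal (kl_gauss (u * y) * exponential_density 1 y)" for u y
  have [measurable]: "f u \<in> borel_measurable lborel" for u
    unfolding f_def by measurable
  have less: "f s y < f t y" if "0 < y" for y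
  proof -
    have "kl_gauss (s * y) * exp (- y) < kl_gauss (t * y) * exp (- y)"
      using assms that by (intro mult_strict_right_mono kl_gauss_strict_mono) auto
    moreover have "0 \<le> kl_gauss (s * y) * exp (- y)"
      using assms that by (simp add: kl_gauss_nonneg)
    ultimately show ?thesis
      using that by (simp add: f_def exponential_density_def ennreal_less_iff)
  qed
  have "AE y in lborel. f s y \<le> f t y"
    using assms
    by (intro AE_I2) (auto intro!: ennreal_leI mult_right_mono kl_gauss_mono
        simp: f_def exponential_density_def)
  moreover have "\<not> (AE y in lborel. f t y \<le> f s y)"
  proof
    assume "AE y in lborel. f t y \<le> f s y"
    then have "AE y in lborel. (y::real) \<le> 0"
      by eventually_elim (meson less not_le)
    with not_AE_lborel_nonpos show False
      by simp
  qed
  ultimately have "(\<integral>\<^sup>+y. f s y \<partial>lborel) < (\<integral>\<^sup>+y. f t y \<partial>lborel)"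
    using assms by (intro nn_integral_less) (auto simp: f_def nn_integral_kl_gauss_exponential)
  then show ?thesis
    using assms by (simp add: f_def nn_integral_kl_gauss_exponential)
qed

lemma mean_kl_gauss_pos:
  assumes "0 < t"
  shows "0 < mean_kl_gauss t"
proof -
  have "0 \<le> ennreal (mean_kl_gauss (t / 2))"
    by simp
  also have "\<dots> < ennreal (mean_kl_gauss t)"
    using assms by (intro ennreal_mean_kl_gauss_strict_mono) auto
  finally show ?thesis
    by simp
qed

lemma mean_kl_gauss_strict_mono: "0 < s \<Longrightarrow> s < t \<Longrightarrow> mean_kl_gauss s < mean_kl_gauss t"
  using ennreal_mean_kl_gauss_strict_mono[of s t] mean_kl_gauss_pos[of s] by (simp add: ennreal_less_iff)

lemma mean_kl_gauss_le_iff: "0 < s \<Longrightarrow> 0 < t \<Longrightarrow> mean_kl_gauss s \<le> mean_kl_gauss t \<longleftrightarrow> s \<le> t"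
  using mean_kl_gauss_strict_mono[of s t] mean_kl_gauss_strict_mono[of t s]
  by (cases "s = t") (auto simp: not_le[symmetric])

section \<open>The covertness constraint\<close>

lemma circ_gaussian_law_linear_combination:
  assumes "prob_space M" and "finite I" and indep: "prob_space.indep_vars M (\<lambda>_. borel) X I"
    and laws: "\<And>i. i \<in> I \<Longrightarrow> circ_gaussian_law M (X i) (chi i)" and "\<exists>i\<in>I. c i \<noteq> 0"
  shows "circ_gaussian_law M (\<lambda>\<omega>. \<Sum>i\<in>I. c i * X i \<omega>) (\<Sum>i\<in>I. (cmod (c i))\<^sup>2 * chi i)"
proof -
  interpret prob_space M by fact
  define J where "J = {i \<in> I. c i \<noteq> 0}"
  have "indep_vars (\<lambda>_. borel) (\<lambda>i \<omega>. c i * X i \<omega>) I"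
    using indep by (rule indep_vars_compose2) measurable
  then have "indep_vars (\<lambda>_. borel) (\<lambda>i \<omega>. c i * X i \<omega>) J"
    by (rule indep_vars_subset) (auto simp: J_def)
  then have "circ_gaussian_law M (\<lambda>\<omega>. \<Sum>i\<in>J. c i * X i \<omega>) (\<Sum>i\<in>J. (cmod (c i))\<^sup>2 * chi i)"
    using assms by (intro circ_gaussian_law_sum circ_gaussian_law_mult) (auto simp: J_def)
  moreover have "(\<lambda>\<omega>. \<Sum>i\<in>J. c i * X i \<omega>) = (\<lambda>\<omega>. \<Sum>i\<in>I. c i * X i \<omega>)"
    and "(\<Sum>i\<in>J. (cmod (c i))\<^sup>2 * chi i) = (\<Sum>i\<in>I. (cmod (c i))\<^sup>2 * chi i)"
    unfolding J_def using \<open>finite I\<close> by (auto intro!: sum.mono_neutral_left)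
  ultimately show ?thesis
    by simp
qed

lemma integral_kl_gauss_circ_gaussian:
  assumes law: "circ_gaussian_law M Z chi" and "c > 0"
  shows "(\<integral>\<omega>. kl_gauss (c * (cmod (Z \<omega>))\<^sup>2) \<partial>M) = mean_kl_gauss (c * chi)"
proof -
  have chi: "chi > 0" and [measurable]: "Z \<in> borel_measurable M"
    using circ_gaussian_lawD[OF law] by auto
  have "(\<integral>\<^sup>+\<omega>. ennreal (kl_gauss (c * (cmod (Z \<omega>))\<^sup>2)) \<partial>M) =
      (\<integral>\<^sup>+y. ennreal (kl_gauss (c * chi * y) * exponential_density 1 y) \<partial>lborel)"
    using circ_gaussian_law_nn_integral_norm_sq[OF law, of "\<lambda>x. kl_gauss (c * x)"] \<open>c > 0\<close>
    by (simp add: kl_gauss_nonneg mult.assoc)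
  also have "\<dots> = ennreal (mean_kl_gauss (c * chi))"
    using \<open>c > 0\<close> chi by (intro nn_integral_kl_gauss_exponential) simp
  finally show ?thesis
    using \<open>c > 0\<close> chi mean_kl_gauss_pos[of "c * chi"]
    by (subst integral_eq_nn_integral) (auto simp: kl_gauss_nonneg)
qed

lemma circ_gaussian_law_cnj_weighted_sum_add:
  fixes N :: nat and h :: "nat \<Rightarrow> 'a \<Rightarrow> complex"
  assumes "prob_space M" and "cgauss M h0 chi0" "chi0 > 0"
    and "\<And>n. n \<in> {1..N} \<Longrightarrow> cgauss M (h n) chi1" "chi1 > 0"
    and indep: "prob_space.indep_vars M (\<lambda>_. borel) (\<lambda>i. if i = 0 then h0 else h i) {0..N}"
  shows "circ_gaussian_law M (\<lambda>\<omega>. (\<Sum>n=1..N. cnj (h n \<omega>) * w n) + h0 \<omega>)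
    (chi1 * (\<Sum>n=1..N. (cmod (w n))\<^sup>2) + chi0)"
proof -
  interpret prob_space M by fact
  define X where "X i = (if i = 0 then h0 else (\<lambda>\<omega>. cnj (h i \<omega>)))" for i
  define c where "c i = (if i = 0 then 1 else w i)" for i
  define chi where "chi i = (if i = 0 then chi0 else chi1)" for i :: nat
  have "indep_vars (\<lambda>_. borel) (\<lambda>i \<omega>. (if i = 0 then (\<lambda>z. z) else cnj) ((if i = 0 then h0 else h i) \<omega>)) {0..N}"
    using indep by (rule indep_vars_compose2) auto
  moreover have "(\<lambda>i \<omega>. (if i = 0 then (\<lambda>z. z) else cnj) ((if i = 0 then h0 else h i) \<omega>)) = X"
    by (auto simp: X_def fun_eq_iff)
  moreover have "circ_gaussian_law M (X i) (chi i)" if "i \<in> {0..N}" for i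
    using assms that
    by (cases "i = 0") (auto simp: X_def chi_def intro!: circ_gaussian_law_cnj circ_gaussian_law_cgauss)
  ultimately have "circ_gaussian_law M (\<lambda>\<omega>. \<Sum>i\<in>{0..N}. c i * X i \<omega>) (\<Sum>i\<in>{0..N}. (cmod (c i))\<^sup>2 * chi i)"
    by (intro circ_gaussian_law_linear_combination[OF assms(1)]) (auto simp: c_def)
  moreover have "(\<Sum>n=1..N. c n * X n \<omega>) = (\<Sum>n=1..N. cnj (h n \<omega>) * w n)" for \<omega>
    by (rule sum.cong) (auto simp: c_def X_def)
  moreover have "(\<Sum>n=1..N. (cmod (c n))\<^sup>2 * chi n) = chi1 * (\<Sum>n=1..N. (cmod (w n))\<^sup>2)"
    unfolding sum_distrib_left by (rule sum.cong) (auto simp: c_def chi_def)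
  ultimately show ?thesis
    by (simp add: sum.atLeast_Suc_atMost[of 0 N] c_def X_def chi_def add.commute)
qed

lemma ln_minus_divide_eq_kl_gauss:
  assumes "0 \<le> x" "0 < s"
  shows "ln (1 + p * x / s) - p * x / (p * x + s) = kl_gauss (p / s * x)"
  unfolding kl_gauss_def using assms by (simp add: field_simps)

theorem theorem2:
  fixes M :: "'a measure" and N :: nat
    and L eps sigw2 Pa chi_aw chi_rw epsbar :: real
    and h_ar :: "nat \<Rightarrow> complex" and rho theta :: "nat \<Rightarrow> real"
    and h_aw :: "'a \<Rightarrow> complex" and h_rw :: "nat \<Rightarrow> 'a \<Rightarrow> complex"
  assumes "prob_space M"
    and "N \<ge> 1" and "L > 0" and "eps > 0" and "sigw2 > 0" and "Pa > 0"
    and "chi_aw > 0" and "chi_rw > 0"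
    and "\<forall>n\<in>{1..N}. rho n \<in> {0..1} \<and> theta n \<in> {0..<2 * pi}"
    and "cgauss M h_aw chi_aw"
    and "\<forall>n\<in>{1..N}. cgauss M (h_rw n) chi_rw"
    and "prob_space.indep_vars M (\<lambda>_. borel) (\<lambda>i. if i = 0 then h_aw else h_rw i) {0..N}"
    and "epsbar > 0"
    and "(1 + 1 / epsbar) * exp (1 / epsbar) * E1 (1 / epsbar) - 1 - 2 * eps\<^sup>2 / L = 0"
  shows "let X = (\<lambda>\<omega>. (cmod ((\<Sum>n=1..N. cnj (h_rw n \<omega>) * complex_of_real (rho n)
                          * exp (\<i> * complex_of_real (theta n)) * h_ar n) + h_aw \<omega>))\<^sup>2);
             D = (\<lambda>\<omega>. L * (ln (1 + Pa * X \<omega> / sigw2) - Pa * X \<omega> / (Pa * X \<omega> + sigw2)))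
         in ((integral\<^sup>L M D \<le> 2 * eps\<^sup>2) \<longleftrightarrow>
             Pa / sigw2 * (chi_rw * (\<Sum>n=1..N. (rho n)\<^sup>2 * (cmod (h_ar n))\<^sup>2) + chi_aw) \<le> epsbar)"
proof -
  define w where "w n = complex_of_real (rho n) * exp (\<i> * complex_of_real (theta n)) * h_ar n" for n
  define lam where "lam = chi_rw * (\<Sum>n=1..N. (rho n)\<^sup>2 * (cmod (h_ar n))\<^sup>2) + chi_aw"
  define Z where "Z \<omega> = (\<Sum>n=1..N. cnj (h_rw n \<omega>) * complex_of_real (rho n)
    * exp (\<i> * complex_of_real (theta n)) * h_ar n) + h_aw \<omega>" for \<omega>
  have "circ_gaussian_law M (\<lambda>\<omega>. (\<Sum>n=1..N. cnj (h_rw n \<omega>) * w n) + h_aw \<omega>)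
      (chi_rw * (\<Sum>n=1..N. (cmod (w n))\<^sup>2) + chi_aw)"
    using assms by (intro circ_gaussian_law_cnj_weighted_sum_add) auto
  then have "circ_gaussian_law M Z lam"
    by (simp add: Z_def[abs_def] lam_def w_def norm_mult power_mult_distrib mult.assoc)
  then have "(\<integral>\<omega>. kl_gauss (Pa / sigw2 * (cmod (Z \<omega>))\<^sup>2) \<partial>M) = mean_kl_gauss (Pa / sigw2 * lam)"
    by (rule integral_kl_gauss_circ_gaussian) (use assms in simp)
  then have "(\<integral>\<omega>. L * (ln (1 + Pa * (cmod (Z \<omega>))\<^sup>2 / sigw2) -
      Pa * (cmod (Z \<omega>))\<^sup>2 / (Pa * (cmod (Z \<omega>))\<^sup>2 + sigw2)) \<partial>M) = L * mean_kl_gauss (Pa / sigw2 * lam)"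
    using assms by (simp add: ln_minus_divide_eq_kl_gauss)
  moreover have "2 * eps\<^sup>2 = L * mean_kl_gauss epsbar"
    using assms(3,14) by (simp add: mean_kl_gauss_def field_simps)
  moreover have "0 < lam"
    unfolding lam_def using assms by (intro add_nonneg_pos sum_nonneg mult_nonneg_nonneg) auto
  ultimately show ?thesis
    unfolding Let_def Z_def[symmetric] lam_def[symmetric]
    using assms mean_kl_gauss_le_iff[of "Pa / sigw2 * lam" epsbar] by simp
qed

end
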